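(* Let $k$ be an algebraically closed field of arbitrary characteristic and let $\mathcal{C}\subset\mathbb{P}^3$ be a quadric cone with vertex $v$. Fix an integer $d\ge 2$ and a point $q\in\mathcal{C}\setminus\{v\}$, and let $R_q\subset\mathcal{C}$ be the line spanned by $v$ and $q$. Then there is a smooth divisor $Y\in|\mathcal{O}_{\mathcal{C}}(d)|$ such that $v\notin Y$, $q\notin Y$, and $R_q$ meets $Y$ at a unique point.
   Context: $\mathcal{O}_{\mathcal{C}}(d)$ is the restriction of $\mathcal{O}_{\mathbb{P}^3}(d)$ to $\mathcal{C}$. *)

theory Defs
  imports "HOL-Analysis.Analysis" "HOL-Computational_Algebra.Polynomial" "HOL-Library.Numeral_Type"
begin

text \<open>Homogeneous forms of degree d in the four homogeneous coordinates x0..x3 of P^3,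
  represented by their coefficient function on exponent vectors (4 \<Rightarrow> nat).\<close>

type_synonym 'k form4 = "(4 \<Rightarrow> nat) \<Rightarrow> 'k"

definition monomials_deg :: "nat \<Rightarrow> (4 \<Rightarrow> nat) set" where
  "monomials_deg d = {m. (\<Sum>i\<in>UNIV. m i) = d}"

definition is_form :: "nat \<Rightarrow> 'k::field form4 \<Rightarrow> bool" where
  "is_form d F \<longleftrightarrow> (\<forall>m. m \<notin> monomials_deg d \<longrightarrow> F m = 0)"

definition evalf :: "nat \<Rightarrow> 'k::field form4 \<Rightarrow> 'k^4 \<Rightarrow> 'k" where
  "evalf d F x = (\<Sum>m\<in>monomials_deg d. F m * (\<Prod>i\<in>UNIV. (x $ i) ^ (m i)))"

definition pderiv_form :: "4 \<Rightarrow> 'k::field form4 \<Rightarrow> 'k form4" where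
  "pderiv_form i F = (\<lambda>m. of_nat (m i + 1) * F (m(i := m i + 1)))"

definition grad_form :: "nat \<Rightarrow> 'k::field form4 \<Rightarrow> 'k^4 \<Rightarrow> 'k^4" where
  "grad_form d F x = (\<chi> i. evalf (d - 1) (pderiv_form i F) x)"

definition std_cone :: "'k::field^4 \<Rightarrow> 'k" where
  "std_cone y = y $ 0 * y $ 1 + (y $ 2)^2"

text \<open>Q is a quadratic form defining a quadric cone: Q is projectively equivalent to the
  standard cone (over an algebraically closed field these are exactly the rank-3 quadrics).\<close>
definition quadric_cone_form :: "'k::field form4 \<Rightarrow> bool" where
  "quadric_cone_form Q \<longleftrightarrow> is_form 2 Q \<and>
     (\<exists>A::'k^4^4. invertible A \<and> (\<forall>x. evalf 2 Q x = std_cone (A *v x)))"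

definition is_vertex :: "'k::field form4 \<Rightarrow> 'k^4 \<Rightarrow> bool" where
  "is_vertex Q v \<longleftrightarrow> v \<noteq> 0 \<and> evalf 2 Q v = 0 \<and> grad_form 2 Q v = 0"

definition proportional :: "'k::field^4 \<Rightarrow> 'k^4 \<Rightarrow> bool" where
  "proportional x y \<longleftrightarrow> (\<exists>c. c \<noteq> 0 \<and> x = c *s y)"

text \<open>The divisor Y = C \<inter> V(F) (F a degree-d form) is smooth: at every point of Y the
  Jacobian of (Q,F) has rank 2 (Jacobian criterion).\<close>
definition smooth_divisor :: "'k::field form4 \<Rightarrow> nat \<Rightarrow> 'k form4 \<Rightarrow> bool" where
  "smooth_divisor Q d F \<longleftrightarrow>
     (\<forall>p. p \<noteq> 0 \<and> evalf 2 Q p = 0 \<and> evalf d F p = 0 \<longrightarrow>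
        (\<forall>a b. a *s grad_form 2 Q p + b *s grad_form d F p = 0 \<longrightarrow> a = 0 \<and> b = 0))"

text \<open>Affine cone over the projective line spanned by v and q.\<close>
definition span_line :: "'k::field^4 \<Rightarrow> 'k^4 \<Rightarrow> ('k^4) set" where
  "span_line v q = {a *s v + b *s q | a b. True}"

end

theory Submission
  imports Defs
begin

text \<open>Choose coordinates in which the cone is \<open>y0 y1 + y2^2 = 0\<close>, the vertex is \<open>(0:0:0:1)\<close> and
  \<open>q = (\<lambda>:0:0:1)\<close>, so that \<open>R_q\<close> is the line \<open>y1 = y2 = 0\<close>. With \<open>d = n + 2\<close> and \<open>N = n + 1\<close>
  read in \<open>k\<close>, take \<open>Y\<close> to be cut out by
  \<open>G = y3^d + y0^(d-1) y2 + c y2 y3^(d-1) + b y2 (-y1)^(d-1) + e (-y1)^d\<close>,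
  with \<open>(b, c, e) = (0, 1, 1)\<close> if the characteristic divides \<open>N\<close> or \<open>N + 1\<close> and
  \<open>(b, c, e) = (1/(2N^2), (N+1)/N, 0)\<close> otherwise. On \<open>R_q\<close> the form \<open>G\<close> restricts to \<open>y3^d\<close>, so
  \<open>Y\<close> meets \<open>R_q\<close> only in \<open>(1:0:0:0)\<close> and misses \<open>v\<close> and \<open>q\<close>. Smoothness is the Jacobian
  criterion: on the chart \<open>y0 \<noteq> 0\<close> of the cone, parametrised by \<open>(1, -x^2, x, u)\<close>, the
  restriction of \<open>G\<close> and its two partial derivatives have no common zero, and on \<open>y0 = 0\<close>
  the derivative of \<open>G\<close> in the direction \<open>y2\<close> does not vanish.\<close>

section \<open>Forms as functions\<close>

lemma finite_monomials_deg: "finite (monomials_deg d)"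
proof -
  have "monomials_deg d \<subseteq> PiE UNIV (\<lambda>_. {..d})"
  proof
    fix m assume "m \<in> monomials_deg d"
    then have "m i \<le> d" for i
      using member_le_sum[of i UNIV m] by (simp add: monomials_deg_def)
    then show "m \<in> PiE UNIV (\<lambda>_. {..d})" by (auto simp: PiE_def extensional_def)
  qed
  moreover have "finite (PiE (UNIV::4 set) (\<lambda>_. {..d}))" by (intro finite_PiE) auto
  ultimately show ?thesis by (rule finite_subset)
qed

definition form_function :: "nat \<Rightarrow> ('k::field^4 \<Rightarrow> 'k) \<Rightarrow> bool" where
  "form_function d f \<longleftrightarrow> (\<exists>F. is_form d F \<and> evalf d F = f)"

lemma form_function_monomial: "form_function (sum m UNIV) (\<lambda>x. c * (\<Prod>i\<in>UNIV. x $ i ^ m i))"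
proof -
  define F where "F = (\<lambda>n. if n = m then c else 0)"
  have "is_form (sum m UNIV) F" by (auto simp: is_form_def F_def monomials_deg_def)
  moreover have "evalf (sum m UNIV) F x = c * (\<Prod>i\<in>UNIV. x $ i ^ m i)" for x
  proof -
    have "evalf (sum m UNIV) F x =
        (\<Sum>n\<in>monomials_deg (sum m UNIV). if n = m then c * (\<Prod>i\<in>UNIV. x $ i ^ n i) else 0)"
      unfolding evalf_def by (intro sum.cong) (auto simp: F_def)
    also have "\<dots> = c * (\<Prod>i\<in>UNIV. x $ i ^ m i)"
      using finite_monomials_deg by (simp add: monomials_deg_def)
    finally show ?thesis .
  qed
  ultimately show ?thesis unfolding form_function_def by blast
qed

lemma form_function_zero: "form_function d (\<lambda>x. 0)"
  unfolding form_function_def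
  by (rule exI[of _ "\<lambda>m. 0"]) (auto simp: is_form_def evalf_def fun_eq_iff)

lemma form_function_add:
  assumes "form_function d f" "form_function d g"
  shows "form_function d (\<lambda>x. f x + g x)"
proof -
  obtain F G where F: "is_form d F" "evalf d F = f" and G: "is_form d G" "evalf d G = g"
    using assms unfolding form_function_def by blast
  have "is_form d (\<lambda>m. F m + G m)" using F G by (auto simp: is_form_def)
  moreover have "evalf d (\<lambda>m. F m + G m) = (\<lambda>x. f x + g x)"
    using F G by (auto simp: evalf_def sum.distrib distrib_right)
  ultimately show ?thesis unfolding form_function_def by blast
qed

lemma form_function_cmult:
  assumes "form_function d f"
  shows "form_function d (\<lambda>x. c * f x)"
proof -
  obtain F where F: "is_form d F" "evalf d F = f"
    using assms unfolding form_function_def by blast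
  have "is_form d (\<lambda>m. c * F m)" using F by (auto simp: is_form_def)
  moreover have "evalf d (\<lambda>m. c * F m) = (\<lambda>x. c * f x)"
    unfolding F(2)[symmetric] evalf_def by (simp add: sum_distrib_left mult.assoc)
  ultimately show ?thesis unfolding form_function_def by blast
qed

lemma form_function_sum:
  "finite S \<Longrightarrow> (\<And>i. i \<in> S \<Longrightarrow> form_function d (f i)) \<Longrightarrow> form_function d (\<lambda>x. \<Sum>i\<in>S. f i x)"
  by (induction S rule: finite_induct) (simp_all add: form_function_zero form_function_add)

lemma form_function_mult:
  assumes "form_function d f" "form_function e g"
  shows "form_function (d + e) (\<lambda>x. f x * g x)"
proof -
  obtain F G where F: "is_form d F" "evalf d F = f" and G: "is_form e G" "evalf e G = g"
    using assms unfolding form_function_def by blast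
  have "(\<lambda>x. f x * g x) = (\<lambda>x. \<Sum>m\<in>monomials_deg d. \<Sum>n\<in>monomials_deg e.
      F m * G n * (\<Prod>i\<in>UNIV. x $ i ^ (m i + n i)))" (is "_ = ?h")
    unfolding F(2)[symmetric] G(2)[symmetric] evalf_def sum_product
    by (simp add: power_add prod.distrib mult_ac)
  moreover have "form_function (d + e) ?h"
  proof (intro form_function_sum finite_monomials_deg)
    fix m n assume "m \<in> monomials_deg d" "n \<in> monomials_deg e"
    then have "sum (\<lambda>i. m i + n i) UNIV = d + e" by (simp add: monomials_deg_def sum.distrib)
    then show "form_function (d + e) (\<lambda>x. F m * G n * (\<Prod>i\<in>UNIV. x $ i ^ (m i + n i)))"
      using form_function_monomial[of "\<lambda>i. m i + n i" "F m * G n"] by simp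
  qed
  ultimately show ?thesis by simp
qed

lemma form_function_power:
  assumes "form_function d f"
  shows "form_function (n * d) (\<lambda>x. f x ^ n)"
proof (induction n)
  case 0
  show ?case using form_function_monomial[of "\<lambda>i. 0" 1] by simp
next
  case (Suc n)
  from form_function_mult[OF assms Suc] show ?case by (simp add: add.commute)
qed

lemma form_function_coord: "form_function 1 (\<lambda>x::'k::field^4. x $ i)"
proof -
  let ?m = "\<lambda>j. if j = i then 1 else 0 :: nat"
  have deg: "sum ?m UNIV = 1" by simp
  have "(\<Prod>j\<in>UNIV. x $ j ^ ?m j) = (\<Prod>j\<in>UNIV. if j = i then x $ j else 1)" for x :: "'k^4"
    by (intro prod.cong) auto
  then have eq: "(\<lambda>x::'k^4. 1 * (\<Prod>j\<in>UNIV. x $ j ^ ?m j)) = (\<lambda>x. x $ i)" by simp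
  have "form_function 1 (\<lambda>x::'k^4. 1 * (\<Prod>j\<in>UNIV. x $ j ^ ?m j))"
    using form_function_monomial[of ?m 1] unfolding deg .
  then show ?thesis unfolding eq .
qed

lemma form_function_matrix_vector: "form_function 1 (\<lambda>x. (A *v x) $ i)"
proof -
  have "form_function 1 (\<lambda>x. \<Sum>j\<in>UNIV. A $ i $ j * x $ j)"
    by (intro form_function_sum form_function_cmult form_function_coord) auto
  then show ?thesis by (simp add: matrix_vector_mult_def)
qed

section \<open>Derivatives along lines\<close>

text \<open>Derivatives are purely algebraic: \<open>c\<close> is the linear coefficient of the polynomial
  \<open>t \<mapsto> f (y + t k)\<close>. Over an infinite field this polynomial, hence \<open>c\<close>, is unique, which lets
  us identify the formal gradient of a form with derivatives computed by the usual rules.\<close>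

definition has_line_deriv :: "('k::field^'n \<Rightarrow> 'k) \<Rightarrow> 'k^'n \<Rightarrow> 'k^'n \<Rightarrow> 'k \<Rightarrow> bool" where
  "has_line_deriv f y k c \<longleftrightarrow> (\<exists>P. (\<forall>t. f (y + t *s k) = poly P t) \<and> coeff P 1 = c)"

lemma has_line_deriv_eq_rhs: "has_line_deriv f y k c \<Longrightarrow> c = c' \<Longrightarrow> has_line_deriv f y k c'"
  by simp

lemma has_line_deriv_const: "has_line_deriv (\<lambda>x. a) y k 0"
  unfolding has_line_deriv_def by (rule exI[of _ "[:a:]"]) simp

lemma has_line_deriv_coord: "has_line_deriv (\<lambda>x. x $ i) y k (k $ i)"
  unfolding has_line_deriv_def by (rule exI[of _ "[:y $ i, k $ i:]"]) (simp add: algebra_simps)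

lemma has_line_deriv_add:
  "has_line_deriv f y k c1 \<Longrightarrow> has_line_deriv g y k c2 \<Longrightarrow>
    has_line_deriv (\<lambda>x. f x + g x) y k (c1 + c2)"
  unfolding has_line_deriv_def by (metis coeff_add poly_add)

lemma has_line_deriv_minus: "has_line_deriv f y k c \<Longrightarrow> has_line_deriv (\<lambda>x. - f x) y k (- c)"
  unfolding has_line_deriv_def by (metis coeff_minus poly_minus)

lemma has_line_deriv_mult:
  assumes "has_line_deriv f y k c1" "has_line_deriv g y k c2"
  shows "has_line_deriv (\<lambda>x. f x * g x) y k (f y * c2 + c1 * g y)"
proof -
  obtain P Q where P: "\<forall>t. f (y + t *s k) = poly P t" "coeff P 1 = c1"
    and Q: "\<forall>t. g (y + t *s k) = poly Q t" "coeff Q 1 = c2"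
    using assms unfolding has_line_deriv_def by blast
  have "coeff P 0 = f y" "coeff Q 0 = g y"
    using P(1) Q(1) by (metis poly_0_coeff_0 vector_smult_lzero add.right_neutral)+
  moreover have "coeff (P * Q) 1 = coeff P 0 * coeff Q 1 + coeff P 1 * coeff Q 0"
    by (simp add: coeff_mult atMost_Suc add.commute)
  ultimately have "coeff (P * Q) 1 = f y * c2 + c1 * g y" using P(2) Q(2) by simp
  moreover have "\<forall>t. f (y + t *s k) * g (y + t *s k) = poly (P * Q) t" using P Q by simp
  ultimately show ?thesis unfolding has_line_deriv_def by blast
qed

lemma has_line_deriv_cmult: "has_line_deriv f y k c \<Longrightarrow> has_line_deriv (\<lambda>x. a * f x) y k (a * c)"
  using has_line_deriv_mult[OF has_line_deriv_const] by fastforce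

lemma has_line_deriv_power:
  assumes "has_line_deriv f y k c"
  shows "has_line_deriv (\<lambda>x. f x ^ n) y k (of_nat n * f y ^ (n - 1) * c)"
proof (induction n)
  case 0
  show ?case using has_line_deriv_const[of 1 y k] by simp
next
  case (Suc n)
  have "f y * (of_nat n * f y ^ (n - 1) * c) + c * f y ^ n = of_nat (Suc n) * f y ^ (Suc n - 1) * c"
    by (cases n) (simp_all add: algebra_simps)
  then show ?case using has_line_deriv_mult[OF assms Suc.IH] by simp
qed

lemma has_line_deriv_sum:
  "finite S \<Longrightarrow> (\<And>i. i \<in> S \<Longrightarrow> has_line_deriv (f i) y k (c i)) \<Longrightarrow>
    has_line_deriv (\<lambda>x. \<Sum>i\<in>S. f i x) y k (\<Sum>i\<in>S. c i)"
  by (induction S rule: finite_induct) (simp_all add: has_line_deriv_const has_line_deriv_add)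

lemma has_line_deriv_prod:
  "finite S \<Longrightarrow> (\<And>i. i \<in> S \<Longrightarrow> has_line_deriv (f i) y k (c i)) \<Longrightarrow>
    has_line_deriv (\<lambda>x. \<Prod>i\<in>S. f i x) y k (\<Sum>j\<in>S. c j * (\<Prod>i\<in>S - {j}. f i y))"
proof (induction S rule: finite_induct)
  case empty
  show ?case using has_line_deriv_const[of 1 y k] by simp
next
  case (insert a S)
  have "(\<Sum>j\<in>S. c j * (\<Prod>i\<in>insert a S - {j}. f i y)) = f a y * (\<Sum>j\<in>S. c j * (\<Prod>i\<in>S - {j}. f i y))"
    unfolding sum_distrib_left
  proof (intro sum.cong refl)
    fix j assume "j \<in> S"
    then have "insert a S - {j} = insert a (S - {j})" using insert by auto
    then show "c j * (\<Prod>i\<in>insert a S - {j}. f i y) = f a y * (c j * (\<Prod>i\<in>S - {j}. f i y))"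
      using insert by (simp add: mult_ac)
  qed
  moreover have "has_line_deriv (\<lambda>x. f a x * (\<Prod>i\<in>S. f i x)) y k
      (f a y * (\<Sum>j\<in>S. c j * (\<Prod>i\<in>S - {j}. f i y)) + c a * (\<Prod>i\<in>S. f i y))"
    using insert by (intro has_line_deriv_mult) auto
  ultimately show ?case using insert by (simp add: insert_Diff_if algebra_simps)
qed

lemma has_line_deriv_matrix_comp:
  fixes A :: "'k::field^'n^'m"
  shows "has_line_deriv g (A *v p) (A *v h) c \<Longrightarrow> has_line_deriv (\<lambda>x. g (A *v x)) p h c"
  unfolding has_line_deriv_def by (simp add: matrix_vector_right_distrib vector_scalar_commute)

lemma infinite_UNIV_alg_closed: "infinite (UNIV :: 'k::alg_closed_field set)"
proof
  assume fin: "finite (UNIV :: 'k set)"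
  define P :: "'k poly" where "P = (\<Prod>a\<in>UNIV. [:-a, 1:]) + 1"
  have "degree (\<Prod>a\<in>(UNIV::'k set). [:-a, 1:]) = card (UNIV :: 'k set)"
    by (subst degree_prod_sum_eq) auto
  moreover have "card (UNIV :: 'k set) > 0" using fin by (simp add: card_gt_0_iff)
  ultimately have "degree P > 0" unfolding P_def by (metis degree_add_eq_left degree_1)
  then obtain x where "poly P x = 0" using alg_closed_imp_poly_has_root by blast
  moreover have "poly (\<Prod>a\<in>(UNIV::'k set). [:-a, 1:]) x = 0"
    using fin by (simp add: poly_prod prod_zero_iff)
  ultimately show False unfolding P_def by simp
qed

lemma has_line_deriv_unique:
  assumes "infinite (UNIV :: 'k::field set)"
    and "has_line_deriv f y k (c1::'k)" "has_line_deriv f y k c2"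
  shows "c1 = c2"
proof -
  obtain P Q where P: "\<forall>t. f (y + t *s k) = poly P t" "coeff P 1 = c1"
    and Q: "\<forall>t. f (y + t *s k) = poly Q t" "coeff Q 1 = c2"
    using assms(2,3) unfolding has_line_deriv_def by blast
  have "P = Q"
  proof (rule ccontr)
    assume "P \<noteq> Q"
    then have "finite {t. poly (P - Q) t = 0}" by (intro poly_roots_finite) simp
    moreover have "{t. poly (P - Q) t = 0} = UNIV" using P Q by auto
    ultimately show False using assms(1) by simp
  qed
  then show ?thesis using P Q by simp
qed

lemma sum_fun_upd_UNIV: "sum (f(j := v)) (UNIV :: 'a::finite set) + f j = sum f UNIV + (v::nat)"
proof -
  have "sum (f(j := v)) UNIV = v + sum (f(j := v)) (UNIV - {j})"
    "sum f UNIV = f j + sum f (UNIV - {j})"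
    by (subst sum.remove[of _ j]; simp)+
  moreover have "sum (f(j := v)) (UNIV - {j}) = sum f (UNIV - {j})"
    by (intro sum.cong) auto
  ultimately show ?thesis by simp
qed

lemma evalf_pderiv_form:
  fixes F :: "'k::field form4"
  assumes "1 \<le> d"
  shows "evalf (d - 1) (pderiv_form j F) p = (\<Sum>m\<in>monomials_deg d.
    F m * (of_nat (m j) * p $ j ^ (m j - 1) * (\<Prod>i\<in>UNIV - {j}. p $ i ^ m i)))"
proof -
  define T where "T = (\<lambda>m. F m * (of_nat (m j) * p $ j ^ (m j - 1) * (\<Prod>i\<in>UNIV - {j}. p $ i ^ m i)))"
  define S where "S = monomials_deg d \<inter> {m. m j \<noteq> 0}"
  have "evalf (d - 1) (pderiv_form j F) p = (\<Sum>m\<in>S. T m)"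
    unfolding evalf_def
  proof (rule sum.reindex_bij_witness[where i="\<lambda>m. m(j := m j - 1)" and j="\<lambda>m. m(j := Suc (m j))"])
    fix b assume "b \<in> monomials_deg (d - 1)"
    then have "sum b UNIV = d - 1" by (simp add: monomials_deg_def)
    moreover have "sum (b(j := Suc (b j))) UNIV + b j = sum b UNIV + Suc (b j)"
      by (rule sum_fun_upd_UNIV)
    ultimately show "b(j := Suc (b j)) \<in> S" using assms by (simp add: S_def monomials_deg_def)
    have "(\<Prod>i\<in>UNIV - {j}. p $ i ^ (b(j := Suc (b j))) i) = (\<Prod>i\<in>UNIV - {j}. p $ i ^ b i)"
      by (intro prod.cong) auto
    then show "T (b(j := Suc (b j))) = pderiv_form j F b * (\<Prod>i\<in>UNIV. p $ i ^ b i)"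
      unfolding T_def pderiv_form_def by (subst prod.remove[of _ j]) (simp_all add: mult_ac)
  next
    fix a assume "a \<in> S"
    then have "sum a UNIV = d" "a j \<noteq> 0" by (auto simp: S_def monomials_deg_def)
    moreover have "sum (a(j := a j - 1)) UNIV + a j = sum a UNIV + (a j - 1)" by (rule sum_fun_upd_UNIV)
    ultimately show "a(j := a j - 1) \<in> monomials_deg (d - 1)" by (simp add: monomials_deg_def)
  qed (auto simp: S_def)
  also have "(\<Sum>m\<in>S. T m) = (\<Sum>m\<in>monomials_deg d. T m)"
    by (rule sum.mono_neutral_left) (auto simp: S_def T_def finite_monomials_deg)
  finally show ?thesis unfolding T_def .
qed

lemma has_line_deriv_evalf:
  fixes F :: "'k::field form4"
  assumes "1 \<le> d"
  shows "has_line_deriv (evalf d F) p h (\<Sum>i\<in>UNIV. grad_form d F p $ i * h $ i)"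
proof -
  have "has_line_deriv (\<lambda>x. \<Sum>m\<in>monomials_deg d. F m * (\<Prod>i\<in>UNIV. x $ i ^ m i)) p h
     (\<Sum>m\<in>monomials_deg d. F m * (\<Sum>j\<in>UNIV. of_nat (m j) * p $ j ^ (m j - 1) * h $ j *
        (\<Prod>i\<in>UNIV - {j}. p $ i ^ m i)))"
    by (intro has_line_deriv_sum has_line_deriv_cmult has_line_deriv_prod has_line_deriv_power has_line_deriv_coord
        finite_monomials_deg) auto
  moreover have "(\<Sum>m\<in>monomials_deg d. F m * (\<Sum>j\<in>UNIV. of_nat (m j) * p $ j ^ (m j - 1) * h $ j *
        (\<Prod>i\<in>UNIV - {j}. p $ i ^ m i))) = (\<Sum>j\<in>UNIV. grad_form d F p $ j * h $ j)"
    unfolding grad_form_def vec_lambda_beta evalf_pderiv_form[OF assms]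
    by (simp add: sum_distrib_left sum_distrib_right mult_ac sum.swap[of _ "monomials_deg d"])
  ultimately show ?thesis unfolding evalf_def[abs_def] by simp
qed

lemma grad_form_dot_eq:
  fixes F :: "'k::field form4" and P :: "'k^4^'m"
  assumes "infinite (UNIV :: 'k set)" and "1 \<le> d"
    and "\<And>x. evalf d F x = g (P *v x)" and "\<And>y k. has_line_deriv g y k (D y k)"
  shows "(\<Sum>i\<in>UNIV. grad_form d F p $ i * h $ i) = D (P *v p) (P *v h)"
proof -
  have "evalf d F = (\<lambda>x. g (P *v x))" using assms(3) by auto
  then have "has_line_deriv (evalf d F) p h (D (P *v p) (P *v h))"
    using has_line_deriv_matrix_comp assms(4) by metis
  then show ?thesis using has_line_deriv_unique[OF assms(1) has_line_deriv_evalf[OF assms(2)]] by blast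
qed

section \<open>The standard cone\<close>

definition vec4 :: "'a \<Rightarrow> 'a \<Rightarrow> 'a \<Rightarrow> 'a \<Rightarrow> 'a^4" where
  "vec4 a0 a1 a2 a3 = (\<chi> i. if i = 0 then a0 else if i = 1 then a1 else if i = 2 then a2 else a3)"

lemma vec4_nth [simp]:
  "vec4 a0 a1 a2 a3 $ 0 = a0" "vec4 a0 a1 a2 a3 $ 1 = a1"
  "vec4 a0 a1 a2 a3 $ 2 = a2" "vec4 a0 a1 a2 a3 $ 3 = a3"
  by (simp_all add: vec4_def)

text \<open>The library states these with indices \<open>1..4\<close>; in the type \<open>4\<close>, \<open>4 = 0\<close>.\<close>

lemma forall_UNIV_4: "(\<forall>i::4. P i) \<longleftrightarrow> P 0 \<and> P 1 \<and> P 2 \<and> P 3"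
proof -
  have "(4::4) = 0" by simp
  then show ?thesis using forall_4[of P] by metis
qed

lemma vec4_eq_iff: "(x::'a^4) = y \<longleftrightarrow> x$0 = y$0 \<and> x$1 = y$1 \<and> x$2 = y$2 \<and> x$3 = y$3"
  by (simp add: vec_eq_iff forall_UNIV_4)

lemma sum_UNIV_4: "sum f (UNIV::4 set) = f 0 + f 1 + f 2 + f 3"
proof -
  have "(4::4) = 0" by simp
  then show ?thesis using sum_4[of f] by (simp only:) (simp add: ac_simps)
qed

definition std_cone_deriv :: "'k::field^4 \<Rightarrow> 'k^4 \<Rightarrow> 'k" where
  "std_cone_deriv y k = y$0 * k$1 + k$0 * y$1 + 2 * y$2 * k$2"

lemma has_line_deriv_std_cone: "has_line_deriv std_cone y k (std_cone_deriv y k)"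
  unfolding std_cone_def[abs_def]
  by (rule has_line_deriv_eq_rhs, (rule has_line_deriv_add has_line_deriv_mult
      has_line_deriv_power has_line_deriv_coord)+) (simp add: std_cone_deriv_def algebra_simps)

lemma std_cone_vertex:
  fixes Q :: "'k::field form4"
  assumes inf: "infinite (UNIV :: 'k set)" and A: "invertible A"
    and QA: "\<And>x. evalf 2 Q x = std_cone (A *v x)" and v: "is_vertex Q v"
  obtains c where "c \<noteq> 0" "A *v v = vec4 0 0 0 c"
proof -
  have bij: "bij ((*v) A)" using A by (simp add: invertible_eq_bij)
  define y where "y = A *v v"
  have deriv: "std_cone_deriv y k = 0" for k
  proof -
    obtain h where h: "k = A *v h" using bij_is_surj[OF bij] by (metis surjD)
    have "std_cone_deriv y k = (\<Sum>i\<in>UNIV. grad_form 2 Q v $ i * h $ i)"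
      unfolding y_def h grad_form_dot_eq[OF inf one_le_numeral QA has_line_deriv_std_cone] ..
    then show ?thesis using v by (simp add: is_vertex_def)
  qed
  have "y $ 0 = 0" "y $ 1 = 0"
    using deriv[of "vec4 0 1 0 0"] deriv[of "vec4 1 0 0 0"] by (simp_all add: std_cone_deriv_def)
  moreover have "std_cone y = 0" using v QA by (simp add: is_vertex_def y_def)
  ultimately have y: "y = vec4 0 0 0 (y $ 3)" by (simp add: std_cone_def vec4_eq_iff)
  have "y \<noteq> 0"
    using v bij_is_inj[OF bij] unfolding y_def is_vertex_def by (metis matrix_vector_mult_0_right injD)
  then have "y $ 3 \<noteq> 0" using y by (auto simp: vec4_eq_iff)
  then show thesis using that y y_def by blast
qed

lemma invertibleI_left_inverse:
  fixes A B :: "'k::field^'n^'n"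
  assumes "\<And>x. B *v (A *v x) = x"
  shows "invertible A"
  unfolding invertible_left_inverse
  by (metis assms matrix_eq matrix_vector_mul_assoc matrix_vector_mul_lid)

lemma matrix_vector_mult_vec4:
  "vec4 r0 r1 r2 r3 *v y = vec4 (\<Sum>i\<in>UNIV. r0$i * y$i) (\<Sum>i\<in>UNIV. r1$i * y$i)
    (\<Sum>i\<in>UNIV. r2$i * y$i) (\<Sum>i\<in>UNIV. r3$i * y$i)"
  by (simp add: vec4_eq_iff matrix_vector_mult_def)

lemma std_cone_normalize_point:
  fixes z :: "'k::field^4"
  assumes cone: "std_cone z = 0" and nz: "\<not> (z$0 = 0 \<and> z$1 = 0 \<and> z$2 = 0)"
  obtains M :: "'k^4^4" and lam where "invertible M" "\<And>y. std_cone (M *v y) = std_cone y"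
    "\<And>s. M *v vec4 0 0 0 s = vec4 0 0 0 s" "M *v z = vec4 lam 0 0 1" "lam \<noteq> 0"
proof (cases "z$0 = 0")
  case False
  define a where "a = z$2 / z$0"
  define b where "b = (1 - z$3) / z$0"
  define M :: "'k^4^4" where
    "M = vec4 (vec4 1 0 0 0) (vec4 (- (a^2)) 1 (2*a) 0) (vec4 (-a) 0 1 0) (vec4 b 0 0 1)"
  define M' :: "'k^4^4" where
    "M' = vec4 (vec4 1 0 0 0) (vec4 (- (a^2)) 1 (-2*a) 0) (vec4 a 0 1 0) (vec4 (-b) 0 0 1)"
  note M_simps = M_def M'_def matrix_vector_mult_vec4 sum_UNIV_4
  have "M' *v (M *v y) = y" for y
    by (simp add: M_simps vec4_eq_iff algebra_simps power2_eq_square)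
  then have "invertible M" by (rule invertibleI_left_inverse)
  moreover have "std_cone (M *v y) = std_cone y" for y
    by (simp add: M_simps std_cone_def algebra_simps power2_eq_square)
  moreover have "M *v vec4 0 0 0 s = vec4 0 0 0 s" for s
    by (simp add: M_simps)
  moreover have "z$1 = - ((z$2)^2) / z$0" using cone False
    by (simp add: std_cone_def field_simps eq_neg_iff_add_eq_0 algebra_simps)
  then have "M *v z = vec4 (z$0) 0 0 1"
    using False by (simp add: M_simps vec4_eq_iff a_def b_def field_simps power2_eq_square)
  ultimately show thesis using False by (intro that)
next
  case True
  then have "z$2 = 0" "z$1 \<noteq> 0" using cone nz by (auto simp: std_cone_def)
  define b where "b = (1 - z$3) / z$1"
  define M :: "'k^4^4" where "M = vec4 (vec4 0 1 0 0) (vec4 1 0 0 0) (vec4 0 0 1 0) (vec4 0 b 0 1)"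
  define M' :: "'k^4^4" where "M' = vec4 (vec4 0 1 0 0) (vec4 1 0 0 0) (vec4 0 0 1 0) (vec4 (-b) 0 0 1)"
  note M_simps = M_def M'_def matrix_vector_mult_vec4 sum_UNIV_4
  have "M' *v (M *v y) = y" for y
    by (simp add: M_simps vec4_eq_iff)
  then have "invertible M" by (rule invertibleI_left_inverse)
  moreover have "std_cone (M *v y) = std_cone y" for y
    by (simp add: M_simps std_cone_def algebra_simps)
  moreover have "M *v vec4 0 0 0 s = vec4 0 0 0 s" for s
    by (simp add: M_simps)
  moreover have "M *v z = vec4 (z$1) 0 0 1"
    using True \<open>z$2 = 0\<close> \<open>z$1 \<noteq> 0\<close> by (simp add: M_simps vec4_eq_iff b_def field_simps)
  ultimately show thesis using \<open>z$1 \<noteq> 0\<close> by (intro that)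
qed

lemma cone_normal_coordinates:
  fixes Q :: "'k::field form4"
  assumes inf: "infinite (UNIV :: 'k set)" and cone: "quadric_cone_form Q"
    and vertex: "is_vertex Q v" and "q \<noteq> 0" and "evalf 2 Q q = 0" and "\<not> proportional q v"
  obtains P :: "'k^4^4" and c lam where "invertible P" "\<And>x. evalf 2 Q x = std_cone (P *v x)"
    "c \<noteq> 0" "P *v v = vec4 0 0 0 c" "lam \<noteq> 0" "P *v q = vec4 lam 0 0 1"
proof -
  obtain A :: "'k^4^4" where A: "invertible A" and QA: "\<And>x. evalf 2 Q x = std_cone (A *v x)"
    using cone unfolding quadric_cone_form_def by blast
  obtain c where c: "c \<noteq> 0" "A *v v = vec4 0 0 0 c" using std_cone_vertex[OF inf A QA vertex] .
  define z where "z = A *v q"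
  have z_cone: "std_cone z = 0" using \<open>evalf 2 Q q = 0\<close> QA by (simp add: z_def)
  have z_not_vertex: "\<not> (z$0 = 0 \<and> z$1 = 0 \<and> z$2 = 0)"
  proof
    assume "z$0 = 0 \<and> z$1 = 0 \<and> z$2 = 0"
    then have "A *v q = A *v ((z$3 / c) *s v)"
      using c by (simp add: vector_scalar_commute vec4_eq_iff z_def)
    moreover have "inj ((*v) A)" using A by (simp add: invertible_eq_bij bij_is_inj)
    ultimately have q: "q = (z$3 / c) *s v" by (simp add: inj_eq)
    then have "z$3 \<noteq> 0" using \<open>q \<noteq> 0\<close> by auto
    then show False
      using q c(1) \<open>\<not> proportional q v\<close> unfolding proportional_def by (metis divide_eq_0_iff)
  qed
  obtain M :: "'k^4^4" and lam where M: "invertible M"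
    "\<And>y. std_cone (M *v y) = std_cone y" "\<And>s. M *v vec4 0 0 0 s = vec4 0 0 0 s"
    "M *v z = vec4 lam 0 0 1" "lam \<noteq> 0"
    using std_cone_normalize_point[OF z_cone z_not_vertex] by blast
  show thesis
  proof (rule that[of "M ** A"])
    show "invertible (M ** A)" using M(1) A by (rule invertible_mult)
  qed (use M QA c z_def in \<open>simp_all flip: matrix_vector_mul_assoc\<close>)
qed

lemma smooth_divisor_normal_coordinates:
  fixes Q F :: "'k::field form4"
  assumes inf: "infinite (UNIV :: 'k set)" and "1 \<le> d" and P: "invertible P"
    and QP: "\<And>x. evalf 2 Q x = std_cone (P *v x)" and FP: "\<And>x. evalf d F x = g (P *v x)"
    and D: "\<And>y k. has_line_deriv g y k (D y k)"
    and nonsingular: "\<And>y \<alpha> \<beta>. y \<noteq> 0 \<Longrightarrow> std_cone y = 0 \<Longrightarrow> g y = 0 \<Longrightarrow>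
      (\<And>k. \<alpha> * std_cone_deriv y k + \<beta> * D y k = 0) \<Longrightarrow> \<alpha> = 0 \<and> \<beta> = 0"
  shows "smooth_divisor Q d F"
  unfolding smooth_divisor_def
proof (intro allI impI)
  fix p \<alpha> \<beta>
  assume p: "p \<noteq> 0 \<and> evalf 2 Q p = 0 \<and> evalf d F p = 0"
    and grad: "\<alpha> *s grad_form 2 Q p + \<beta> *s grad_form d F p = 0"
  have bij: "bij ((*v) P)" using P by (simp add: invertible_eq_bij)
  have "P *v p \<noteq> 0" using p bij_is_inj[OF bij] by (metis matrix_vector_mult_0_right injD)
  moreover have "std_cone (P *v p) = 0" "g (P *v p) = 0" using p QP FP by simp_all
  moreover have "\<alpha> * std_cone_deriv (P *v p) k + \<beta> * D (P *v p) k = 0" for k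
  proof -
    obtain h where h: "k = P *v h" using bij_is_surj[OF bij] by (metis surjD)
    have "0 = (\<Sum>i\<in>UNIV. (\<alpha> *s grad_form 2 Q p + \<beta> *s grad_form d F p) $ i * h $ i)"
      unfolding grad by simp
    also have "\<dots> = \<alpha> * (\<Sum>i\<in>UNIV. grad_form 2 Q p $ i * h $ i)
        + \<beta> * (\<Sum>i\<in>UNIV. grad_form d F p $ i * h $ i)"
      by (simp add: sum_distrib_left sum.distrib algebra_simps)
    also have "\<dots> = \<alpha> * std_cone_deriv (P *v p) k + \<beta> * D (P *v p) k"
      unfolding h grad_form_dot_eq[OF inf one_le_numeral QP has_line_deriv_std_cone]
        grad_form_dot_eq[OF inf \<open>1 \<le> d\<close> FP D] ..
    finally show ?thesis by simp
  qed
  ultimately show "\<alpha> = 0 \<and> \<beta> = 0" by (rule nonsingular)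
qed

section \<open>The divisor in normal coordinates\<close>

definition divisor_form :: "'k::field \<Rightarrow> 'k \<Rightarrow> 'k \<Rightarrow> nat \<Rightarrow> 'k^4 \<Rightarrow> 'k" where
  "divisor_form b c e n y = y$3^(n+2) + y$0^(n+1) * y$2 + c * y$2 * y$3^(n+1)
      + b * y$2 * (- y$1)^(n+1) + e * (- y$1)^(n+2)"

definition divisor_form_deriv :: "'k::field \<Rightarrow> 'k \<Rightarrow> 'k \<Rightarrow> nat \<Rightarrow> 'k^4 \<Rightarrow> 'k^4 \<Rightarrow> 'k" where
  "divisor_form_deriv b c e n y k = of_nat (n+2) * y$3^(n+1) * k$3
     + (of_nat (n+1) * y$0^n * k$0 * y$2 + y$0^(n+1) * k$2)
     + c * (k$2 * y$3^(n+1) + y$2 * of_nat (n+1) * y$3^n * k$3)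
     + b * (k$2 * (- y$1)^(n+1) - y$2 * of_nat (n+1) * (- y$1)^n * k$1)
     - e * of_nat (n+2) * (- y$1)^(n+1) * k$1"

definition admissible_coeffs :: "'k::field \<Rightarrow> 'k \<Rightarrow> 'k \<Rightarrow> nat \<Rightarrow> bool" where
  "admissible_coeffs b c e n \<longleftrightarrow>
     (let N = (of_nat (n+1) :: 'k) in
      (b = 0 \<and> c = 1 \<and> e = 1 \<and> (N + 1 = 0 \<or> N = 0)) \<or>
      (b = 1/(2*N^2) \<and> c = (N+1)/N \<and> e = 0 \<and> N \<noteq> 0 \<and> N + 1 \<noteq> 0 \<and> (2::'k) \<noteq> 0))"

lemma admissible_coeffs_exist: "\<exists>b c e. admissible_coeffs (b::'k::field) c e n"
proof (cases "(of_nat (n+1) + 1 :: 'k) = 0 \<or> (of_nat (n+1) :: 'k) = 0")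
  case True
  then have "admissible_coeffs (0::'k) 1 1 n" unfolding admissible_coeffs_def Let_def by blast
  then show ?thesis by blast
next
  case False
  define N where "N = (of_nat (n+1) :: 'k)"
  have "(2::'k) \<noteq> 0"
  proof
    assume two: "(2::'k) = 0"
    have "even (n + 1) \<or> even (n + 2)" by simp
    then obtain m where m: "n + 1 = 2 * m \<or> n + 2 = 2 * m" by (metis evenE)
    have "(of_nat (2 * m) :: 'k) = 0" using two by simp
    moreover have "(of_nat (n+2) :: 'k) = of_nat (n+1) + 1" by simp
    ultimately have "(of_nat (n+1) :: 'k) = 0 \<or> (of_nat (n+1) + 1 :: 'k) = 0"
      using m by metis
    then show False using False by blast
  qed
  then have "admissible_coeffs (1/(2*N^2)) ((N+1)/N) 0 n"
    using False unfolding admissible_coeffs_def Let_def N_def by blast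
  then show ?thesis by blast
qed

lemma divisor_form_on_axis: "y$1 = 0 \<Longrightarrow> y$2 = 0 \<Longrightarrow> divisor_form b c e n y = y$3^(n+2)"
  by (simp add: divisor_form_def)

lemma has_line_deriv_divisor_form:
  "has_line_deriv (divisor_form b c e n) y k (divisor_form_deriv b c e n y k)"
  unfolding divisor_form_def[abs_def]
  by (rule has_line_deriv_eq_rhs, (rule has_line_deriv_add has_line_deriv_mult has_line_deriv_power
      has_line_deriv_minus has_line_deriv_coord has_line_deriv_const)+)
    (simp add: divisor_form_deriv_def algebra_simps)

lemma form_function_divisor_form: "form_function (n+2) (\<lambda>x. divisor_form b c e n (P *v x))"
proof -
  let ?y = "\<lambda>i x. (P *v x) $ i"
  have y: "form_function 1 (?y i)" for i by (rule form_function_matrix_vector)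
  have minus_y1: "form_function 1 (\<lambda>x. - ?y 1 x)" using form_function_cmult[OF y, of "-1"] by simp
  have "form_function (n+2) (\<lambda>x. ?y 3 x ^ (n+2))"
    using form_function_power[OF y[of 3], where n="n+2"] by simp
  moreover have "form_function (n+2) (\<lambda>x. ?y 0 x ^ (n+1) * ?y 2 x)"
    using form_function_mult[OF form_function_power[OF y[of 0], where n="n+1"] y[of 2]] by simp
  moreover have "form_function (n+2) (\<lambda>x. c * ?y 2 x * ?y 3 x ^ (n+1))"
    using form_function_mult[OF form_function_cmult[OF y[of 2], where c=c]
        form_function_power[OF y[of 3], where n="n+1"]] by simp
  moreover have "form_function (n+2) (\<lambda>x. b * ?y 2 x * (- ?y 1 x) ^ (n+1))"
    using form_function_mult[OF form_function_cmult[OF y[of 2], where c=b]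
        form_function_power[OF minus_y1, where n="n+1"]] by simp
  moreover have "form_function (n+2) (\<lambda>x. e * (- ?y 1 x) ^ (n+2))"
    using form_function_cmult[OF form_function_power[OF minus_y1, where n="n+2"], where c=e] by simp
  ultimately show ?thesis unfolding divisor_form_def by (intro form_function_add)
qed

text \<open>On the chart \<open>y0 \<noteq> 0\<close> the cone is parametrised as \<open>y0 (1, -x^2, x, u)\<close>, and
  \<open>(0, -2 y2, y0, 0)\<close> and \<open>(0, 0, 0, 1)\<close> are the tangent directions \<open>\<partial>/\<partial>x\<close> and \<open>\<partial>/\<partial>u\<close>.
  So the following gives, up to powers of \<open>y0\<close>, the affine equation \<open>f(x, u)\<close> of the divisor
  and its two partial derivatives.\<close>

lemma divisor_form_chart:
  fixes y :: "'k::field^4"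
  assumes y0: "y$0 \<noteq> 0" and cone: "std_cone y = 0"
  defines "x \<equiv> y$2 / y$0" and "u \<equiv> y$3 / y$0"
  shows "divisor_form b c e n y =
      y$0^(n+2) * (u^(n+2) + x + c * x * u^(n+1) + b * x * (x^2)^(n+1) + e * (x^2)^(n+2))"
    "divisor_form_deriv b c e n y (vec4 0 (-2 * y$2) (y$0) 0) = y$0^(n+2) * (1 + c * u^(n+1)
      + b * (x^2)^(n+1) + 2 * b * of_nat (n+1) * x * x * (x^2)^n
      + 2 * e * of_nat (n+2) * x * (x^2)^(n+1))"
    "divisor_form_deriv b c e n y (vec4 0 0 0 1) =
      y$0^(n+1) * (of_nat (n+2) * u^(n+1) + c * of_nat (n+1) * x * u^n)"
proof -
  have y2: "y$2 = y$0 * x" and y3: "y$3 = y$0 * u" using y0 by (simp_all add: x_def u_def)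
  have "y$0 * (y$1 + y$0 * x^2) = 0"
    using cone y2 by (simp add: std_cone_def algebra_simps power2_eq_square)
  then have y1: "- y$1 = y$0 * x^2" using y0 by (simp add: neg_eq_iff_add_eq_0)
  show "divisor_form b c e n y =
      y$0^(n+2) * (u^(n+2) + x + c * x * u^(n+1) + b * x * (x^2)^(n+1) + e * (x^2)^(n+2))"
    unfolding divisor_form_def y1 y2 y3 by (simp add: power_mult_distrib algebra_simps)
  show "divisor_form_deriv b c e n y (vec4 0 (-2 * y$2) (y$0) 0) = y$0^(n+2) * (1 + c * u^(n+1)
      + b * (x^2)^(n+1) + 2 * b * of_nat (n+1) * x * x * (x^2)^n
      + 2 * e * of_nat (n+2) * x * (x^2)^(n+1))"
    unfolding divisor_form_deriv_def vec4_nth y1 y2 y3 by (simp add: power_mult_distrib algebra_simps)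
  show "divisor_form_deriv b c e n y (vec4 0 0 0 1) =
      y$0^(n+1) * (of_nat (n+2) * u^(n+1) + c * of_nat (n+1) * x * u^n)"
    unfolding divisor_form_deriv_def vec4_nth y1 y2 y3 by (simp add: power_mult_distrib algebra_simps)
qed

lemma chart_nonsingular_special_char:
  fixes x u N :: "'k::field"
  assumes char: "N + 1 = 0 \<or> N = 0"
    and f: "u^(n+2) + x + x * u^(n+1) + (x^2)^(n+2) = 0"
    and f_x: "1 + u^(n+1) + 2 * (N + 1) * x * (x^2)^(n+1) = 0"
    and f_u: "(N + 1) * u^(n+1) + N * x * u^n = 0"
  shows False
  using char
proof
  assume N: "N = 0"
  then have "u^(n+1) = 0" using f_u by simp
  then have "u = 0" by auto
  define W where "W = x * (x^2)^(n+1)"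
  have "(x^2)^(n+2) = x * W" by (simp add: W_def power2_eq_square)
  then have "x * (1 + W) = 0" using f \<open>u = 0\<close> by (simp add: algebra_simps)
  moreover have W2: "1 + 2 * W = 0" using f_x N \<open>u = 0\<close> by (simp add: W_def algebra_simps)
  ultimately consider "x = 0" | "1 + W = 0" by auto
  then show False
  proof cases
    case 1
    then show False using W2 by (simp add: W_def)
  next
    case 2
    have "W = (1 + 2 * W) - (1 + W)" by (simp add: algebra_simps)
    then show False using 2 W2 by simp
  qed
next
  assume N: "N + 1 = 0"
  then have "1 + u^(n+1) = 0" using f_x by simp
  then have U: "u^(n+1) = -1" by (simp add: add_eq_0_iff)
  then have "u \<noteq> 0" by auto
  moreover have "x * u^n = 0" using f_u N by (simp add: add_eq_0_iff2)
  ultimately have "x = 0" by simp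
  then have "u^(n+2) = 0" using f by simp
  then show False using \<open>u \<noteq> 0\<close> by simp
qed

lemma generic_char_quadratics_no_common_root:
  fixes U N b g :: "'k::field"
  assumes b: "2 * N^2 * b = 1" and g: "N * g = N + 1"
    and e1: "U - 1 - g * U - b * U^2 = 0" and e2: "1 + g * U + b * (1 + 2 * N) * U^2 = 0"
  shows False
proof -
  have "U * (1 + 2 * N * b * U) = (U - 1 - g * U - b * U^2) + (1 + g * U + b * (1 + 2 * N) * U^2)"
    by (simp add: algebra_simps power2_eq_square)
  then consider "U = 0" | "1 + 2 * N * b * U = 0" using e1 e2 by auto
  then show False
  proof cases
    case 1
    then show False using e2 by simp
  next
    case 2
    have "N + U = N + U * (2 * N^2 * b)" using b by simp
    also have "\<dots> = N * (1 + 2 * N * b * U)" by (simp add: algebra_simps power2_eq_square)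
    finally have "U = - N" using 2 by (simp add: eq_neg_iff_add_eq_0 add.commute)
    have "0 = 2 * (1 + g * U + b * (1 + 2 * N) * U^2)" using e2 by simp
    also have "\<dots> = 2 - 2 * (N * g) + (1 + 2 * N) * (2 * N^2 * b)"
      using \<open>U = - N\<close> by (simp add: algebra_simps power2_eq_square)
    also have "\<dots> = 1" unfolding b g by (simp add: algebra_simps)
    finally show False by simp
  qed
qed

lemma chart_nonsingular_generic_char:
  fixes x u N :: "'k::field"
  assumes N: "N \<noteq> 0" and N1: "N + 1 \<noteq> 0" and two: "(2::'k) \<noteq> 0"
    and f: "u^(n+2) + x + ((N+1)/N) * x * u^(n+1) + (1/(2*N^2)) * x * (x^2)^(n+1) = 0"
    and f_x: "1 + ((N+1)/N) * u^(n+1) + (1/(2*N^2)) * (x^2)^(n+1)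
      + 2 * (1/(2*N^2)) * N * x * x * (x^2)^n = 0"
    and f_u: "(N + 1) * u^(n+1) + ((N+1)/N) * N * x * u^n = 0"
  shows False
proof -
  define g where "g = (N+1)/N"
  define b where "b = 1/(2*N^2)"
  define S where "S = (x^2)^(n+1)"
  define U where "U = u^(n+1)"
  have "x * x * (x^2)^n = S" by (simp add: S_def power2_eq_square)
  moreover have "1 + g * U + b * S + 2 * b * N * (x * x * (x^2)^n) = 0"
    using f_x by (simp add: g_def b_def U_def S_def mult.assoc)
  ultimately have f_x': "1 + g * U + b * (1 + 2 * N) * S = 0" by (simp add: algebra_simps)
  have f': "u * U + x + g * x * U + b * x * S = 0"
    using f by (simp add: g_def b_def U_def S_def)
  have "((N+1)/N) * N = N + 1" using N by simp
  then have "(N + 1) * (u^n * (u + x)) = 0"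
    using f_u by (simp add: algebra_simps)
  then have "u^n * (u + x) = 0" using N1 by simp
  then consider "u = 0" | "u \<noteq> 0" "x = -u" by (auto simp: add_eq_0_iff add.commute)
  then show False
  proof cases
    case 1
    then have "U = 0" by (simp add: U_def)
    then have "x * (1 + b * S) = 0" using f' 1 by (simp add: algebra_simps)
    then consider "x = 0" | "b * S = -1" by (auto simp: add_eq_0_iff)
    then show False
    proof cases
      case 1
      then show False using f_x' \<open>U = 0\<close> by (simp add: S_def)
    next
      case 2
      have "1 + g * U + b * (1 + 2 * N) * S = 1 + (1 + 2 * N) * (b * S)"
        using \<open>U = 0\<close> by (simp add: algebra_simps)
      also have "\<dots> = - 2 * N" unfolding 2 by (simp add: algebra_simps)
      finally show False using f_x' N two by simp
    qed
  next
    case 2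
    have "(u^2)^(n+1) = (u^(n+1))^2" by (metis power_mult mult.commute)
    then have SU: "S = U^2" unfolding S_def U_def 2 by simp
    have "u * (U - 1 - g * U - b * U^2) = 0"
      using f' unfolding 2 SU by (simp add: algebra_simps power2_eq_square)
    then have "U - 1 - g * U - b * U^2 = 0" using 2 by simp
    moreover have "2 * N^2 * b = 1" "N * g = N + 1" using N two by (simp_all add: b_def g_def)
    ultimately show False using generic_char_quadratics_no_common_root f_x' SU by blast
  qed
qed

lemma divisor_form_chart_nonsingular:
  fixes y :: "'k::field^4"
  assumes coeffs: "admissible_coeffs b c e n"
    and y0: "y$0 \<noteq> 0" and cone: "std_cone y = 0" and G: "divisor_form b c e n y = 0"
    and G_x: "divisor_form_deriv b c e n y (vec4 0 (-2 * y$2) (y$0) 0) = 0"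
    and G_u: "divisor_form_deriv b c e n y (vec4 0 0 0 1) = 0"
  shows False
proof -
  define x where "x = y$2 / y$0"
  define u where "u = y$3 / y$0"
  define N where "N = (of_nat (n+1) :: 'k)"
  have N2: "of_nat (n+2) = N + 1" by (simp add: N_def)
  note chart = divisor_form_chart[OF y0 cone, of b c e n, folded x_def u_def, unfolded N2, folded N_def]
  have f: "u^(n+2) + x + c * x * u^(n+1) + b * x * (x^2)^(n+1) + e * (x^2)^(n+2) = 0"
    using chart(1) G y0 by simp
  have f_x: "1 + c * u^(n+1) + b * (x^2)^(n+1) + 2 * b * N * x * x * (x^2)^n
      + 2 * e * (N + 1) * x * (x^2)^(n+1) = 0"
    using chart(2) G_x y0 by simp
  have f_u: "(N + 1) * u^(n+1) + c * N * x * u^n = 0"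
    using chart(3) G_u y0 by simp
  from coeffs consider
      "b = 0" "c = 1" "e = 1" "N + 1 = 0 \<or> N = 0"
    | "b = 1/(2*N^2)" "c = (N+1)/N" "e = 0" "N \<noteq> 0" "N + 1 \<noteq> 0" "(2::'k) \<noteq> 0"
    unfolding admissible_coeffs_def Let_def N_def by blast
  then show False
  proof cases
    case 1
    then show False
      using chart_nonsingular_special_char[where N=N and u=u and n=n and x=x] f f_x f_u by simp
  next
    case 2
    then show False
      using chart_nonsingular_generic_char[where N=N and u=u and n=n and x=x] f f_x f_u by (simp add: mult.assoc)
  qed
qed

lemma divisor_form_avoids_vertex:
  assumes "std_cone y = 0" "divisor_form b c e n y = 0" "y$0 = 0" "y$1 = 0"
  shows "y = 0"
proof -
  have "y$2 = 0" using assms by (simp add: std_cone_def)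
  then have "y$3 = 0" using assms by (auto simp: divisor_form_def)
  then show ?thesis using assms \<open>y$2 = 0\<close> by (simp add: vec4_eq_iff)
qed

lemma divisor_form_deriv_at_infinity:
  fixes y :: "'k::field^4"
  assumes coeffs: "admissible_coeffs b c e n" and "y$0 = 0" "y$1 \<noteq> 0"
    and cone: "std_cone y = 0" and G: "divisor_form b c e n y = 0"
  shows "divisor_form_deriv b c e n y (vec4 0 0 1 0) \<noteq> 0"
proof -
  define N where "N = (of_nat (n+1) :: 'k)"
  have "y$2 = 0" using cone \<open>y$0 = 0\<close> by (simp add: std_cone_def)
  then have deriv: "divisor_form_deriv b c e n y (vec4 0 0 1 0) = c * y$3^(n+1) + b * (- y$1)^(n+1)"
    and G': "y$3^(n+2) + e * (- y$1)^(n+2) = 0"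
    using \<open>y$0 = 0\<close> G by (simp_all add: divisor_form_deriv_def divisor_form_def)
  from coeffs consider "b = 0" "c = 1" "e = 1"
    | "b = 1/(2*N^2)" "e = 0" "N \<noteq> 0" "(2::'k) \<noteq> 0"
    unfolding admissible_coeffs_def Let_def N_def by blast
  then show ?thesis
  proof cases
    case 1
    show ?thesis
    proof
      assume "divisor_form_deriv b c e n y (vec4 0 0 1 0) = 0"
      then have "y$3 = 0" using deriv 1 by auto
      then show False using G' 1 \<open>y$1 \<noteq> 0\<close> by simp
    qed
  next
    case 2
    then have "y$3 = 0" using G' by auto
    then show ?thesis using deriv 2 \<open>y$1 \<noteq> 0\<close> by simp
  qed
qed

lemma divisor_form_tangent_direction:
  assumes coeffs: "admissible_coeffs b c e n"
    and "y \<noteq> 0" and cone: "std_cone y = 0" and G: "divisor_form b c e n y = 0"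
  obtains k where "std_cone_deriv y k = 0" "divisor_form_deriv b c e n y k \<noteq> 0"
proof (cases "y$0 = 0")
  case False
  have "std_cone_deriv y (vec4 0 (-2 * y$2) (y$0) 0) = 0" "std_cone_deriv y (vec4 0 0 0 1) = 0"
    by (simp_all add: std_cone_deriv_def algebra_simps)
  then show thesis
    using divisor_form_chart_nonsingular[OF coeffs False cone G] that by blast
next
  case True
  then have "y$1 \<noteq> 0" using divisor_form_avoids_vertex[OF cone G] \<open>y \<noteq> 0\<close> by blast
  moreover have "std_cone_deriv y (vec4 0 0 1 0) = 0"
    using cone True by (simp add: std_cone_deriv_def std_cone_def)
  ultimately show thesis
    using divisor_form_deriv_at_infinity[OF coeffs True _ cone G] that by blast
qed

lemma divisor_form_nonsingular:
  assumes coeffs: "admissible_coeffs b c e n"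
    and "y \<noteq> 0" and cone: "std_cone y = 0" and G: "divisor_form b c e n y = 0"
    and deriv: "\<And>k. \<alpha> * std_cone_deriv y k + \<beta> * divisor_form_deriv b c e n y k = 0"
  shows "\<alpha> = 0 \<and> \<beta> = 0"
proof -
  obtain k where "std_cone_deriv y k = 0" "divisor_form_deriv b c e n y k \<noteq> 0"
    using divisor_form_tangent_direction[OF coeffs \<open>y \<noteq> 0\<close> cone G] .
  then have "\<beta> = 0" using deriv[of k] by simp
  moreover have "\<alpha> * y$1 = 0" "\<alpha> * y$0 = 0"
    using deriv[of "vec4 1 0 0 0"] deriv[of "vec4 0 1 0 0"] \<open>\<beta> = 0\<close> by (simp_all add: std_cone_deriv_def)
  moreover have "y$0 \<noteq> 0 \<or> y$1 \<noteq> 0"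
    using divisor_form_avoids_vertex[OF cone G] \<open>y \<noteq> 0\<close> by blast
  ultimately show ?thesis by auto
qed

lemma span_line_axis_point:
  fixes P :: "'k::field^4^4"
  assumes Pv: "P *v v = vec4 0 0 0 cv" "cv \<noteq> 0" and Pq: "P *v q = vec4 lam 0 0 1" "lam \<noteq> 0"
  obtains p0 where "p0 \<in> span_line v q" "P *v p0 = vec4 lam 0 0 0" "p0 \<noteq> 0"
    "\<And>p. p \<in> span_line v q \<Longrightarrow> (P *v p) $ 1 = 0 \<and> (P *v p) $ 2 = 0"
    "\<And>p. p \<in> span_line v q \<Longrightarrow> p \<noteq> 0 \<Longrightarrow> (P *v p) $ 3 = 0 \<Longrightarrow> proportional p p0"
proof -
  have P_span: "P *v (s *s v + t *s q) = vec4 (t * lam) 0 0 (s * cv + t)" for s t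
    using Pv Pq by (simp add: matrix_vector_right_distrib vector_scalar_commute vec4_eq_iff)
  define p0 where "p0 = (- (1 / cv)) *s v + 1 *s q"
  have "p0 \<in> span_line v q" unfolding span_line_def p0_def by blast
  moreover have Pp0: "P *v p0 = vec4 lam 0 0 0" using \<open>cv \<noteq> 0\<close> unfolding p0_def P_span by simp
  moreover have "p0 \<noteq> 0"
    using Pp0 \<open>lam \<noteq> 0\<close> by (metis matrix_vector_mult_0_right vec4_nth(1) zero_index)
  moreover have "(P *v p) $ 1 = 0 \<and> (P *v p) $ 2 = 0" if "p \<in> span_line v q" for p
    using that P_span by (auto simp: span_line_def)
  moreover have "proportional p p0"
    if "p \<in> span_line v q" and "p \<noteq> 0" and P3: "(P *v p) $ 3 = 0" for p
  proof -
    obtain s t where p: "p = s *s v + t *s q" using \<open>p \<in> span_line v q\<close> by (auto simp: span_line_def)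
    then have "t = - (s * cv)" using P3 P_span by (simp add: eq_neg_iff_add_eq_0 add.commute)
    then have "s \<noteq> 0" "p = (- (s * cv)) *s p0"
      using \<open>p \<noteq> 0\<close> \<open>cv \<noteq> 0\<close> p by (auto simp: p0_def vec_eq_iff field_simps)
    then show ?thesis
      unfolding proportional_def using \<open>cv \<noteq> 0\<close> by (intro exI[of _ "- (s * cv)"]) simp
  qed
  ultimately show thesis by (rule that)
qed

theorem theorem4p6:
  fixes Q :: "'k::alg_closed_field form4"
    and v q :: "'k^4"
    and d :: nat
  assumes cone: "quadric_cone_form Q"
    and vertex: "is_vertex Q v"
    and d2: "d \<ge> 2"
    and q_nz: "q \<noteq> 0"
    and q_on: "evalf 2 Q q = 0"
    and q_not_v: "\<not> proportional q v"
  shows "\<exists>F :: 'k form4. is_form d F \<and>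
           smooth_divisor Q d F \<and>
           evalf d F v \<noteq> 0 \<and> evalf d F q \<noteq> 0 \<and>
           (\<exists>p \<in> span_line v q. p \<noteq> 0 \<and> evalf 2 Q p = 0 \<and> evalf d F p = 0 \<and>
              (\<forall>p' \<in> span_line v q. p' \<noteq> 0 \<and> evalf 2 Q p' = 0 \<and> evalf d F p' = 0
                   \<longrightarrow> proportional p' p))"
proof -
  have inf: "infinite (UNIV :: 'k set)" by (rule infinite_UNIV_alg_closed)
  obtain n where d: "d = n + 2" using d2 by (metis add.commute le_add_diff_inverse)
  obtain P :: "'k^4^4" and cv lam where P: "invertible P" and QP: "\<And>x. evalf 2 Q x = std_cone (P *v x)"
    and "cv \<noteq> 0" and Pv: "P *v v = vec4 0 0 0 cv" and "lam \<noteq> 0" and Pq: "P *v q = vec4 lam 0 0 1"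
    using cone_normal_coordinates[OF inf cone vertex q_nz q_on q_not_v] by blast
  obtain b c e :: 'k where coeffs: "admissible_coeffs b c e n" using admissible_coeffs_exist by blast
  obtain F where F: "is_form d F" and FP: "\<And>x. evalf d F x = divisor_form b c e n (P *v x)"
    using form_function_divisor_form[of n b c e P] unfolding form_function_def d by metis
  obtain p0 where p0: "p0 \<in> span_line v q" "P *v p0 = vec4 lam 0 0 0" "p0 \<noteq> 0"
    and axis: "\<And>p. p \<in> span_line v q \<Longrightarrow> (P *v p) $ 1 = 0 \<and> (P *v p) $ 2 = 0"
    and unique: "\<And>p. p \<in> span_line v q \<Longrightarrow> p \<noteq> 0 \<Longrightarrow> (P *v p) $ 3 = 0 \<Longrightarrow> proportional p p0"
    using span_line_axis_point[OF Pv \<open>cv \<noteq> 0\<close> Pq \<open>lam \<noteq> 0\<close>] by blast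
  have on_line: "evalf d F p = (P *v p) $ 3 ^ d" if "p \<in> span_line v q" for p
    using axis[OF that] unfolding FP by (simp add: divisor_form_on_axis d)
  have "smooth_divisor Q d F"
    using smooth_divisor_normal_coordinates[OF inf _ P QP FP has_line_deriv_divisor_form
        divisor_form_nonsingular[OF coeffs]] d by simp
  moreover have "evalf d F v \<noteq> 0" "evalf d F q \<noteq> 0"
    using Pv Pq \<open>cv \<noteq> 0\<close> by (simp_all add: FP divisor_form_on_axis)
  moreover have "evalf 2 Q p0 = 0" "evalf d F p0 = 0"
    using on_line[OF p0(1)] p0(2) d by (simp_all add: QP std_cone_def)
  moreover have "proportional p' p0" if "p' \<in> span_line v q" "p' \<noteq> 0" "evalf d F p' = 0" for p'
    using unique[OF that(1,2)] on_line[OF that(1)] that(3) d by auto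
  ultimately show ?thesis using F p0 by blast
qed

end
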